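(* Fix $\delta>0$ and a sequence $(T_N)_N$ with $T_N\in2\mathbb N$, $T_N\le N$, $T_N\to\infty$ and $T_N-\frac{\log N}{c_\delta}\to-\infty$. Then for every $x\in\mathbb R$, $$\lim_{N\to\infty}\mathcal P_{\delta,T_N}\Big(\frac{Y_N}{\sqrt{2e^\delta Q^1_{T_N}(\phi(\delta,T_N))\,N}}\le x\Big)=P(\mathcal N(0,1)\le x),$$ where $Y_N:=\sum_{i=1}^N\varepsilon_i$.
   Context: $(S_n)$ is the simple symmetric random walk on $\mathbb Z$ started at $0$ with law $\mathbf P$. For $T\in2\mathbb N$, $\tau_1^T:=\inf\{n>0:S_n\in T\mathbb Z\}$, $\varepsilon^T_1:=S_{\tau^T_1}/T$, $q^j_T(n):=\mathbf P(\tau^T_1=n,\varepsilon^T_1=j)$ for $j\in\{0,1\}$, $Q^1_T(\lambda):=\sum_n e^{-\lambda n}q^1_T(n)$, $Q_T(\lambda):=\mathbf E[e^{-\lambda\tau^T_1}]$. For $\delta>0$, $\phi(\delta,T)$ is the unique real solution $\lambda$ of $Q_T(\lambda)=e^{-\delta}$; $c_\delta:=\frac\delta2+\log\sqrt{2-e^{-\delta}}$. Under $\mathcal P_{\delta,T}$, $(\xi_i,\varepsilon_i)_{i\ge1}$ are i.i.d. with $\mathcal P_{\delta,T}((\xi_1,\varepsilon_1)=(n,j))=e^\delta q^{|j|}_T(n)e^{-\phi(\delta,T)n}$, $n\in\mathbb N$, $j\in\{-1,0,1\}$. $\mathcal N(0,1)$ is the standard normal law. *)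

theory Defs
  imports "HOL-Probability.Probability"
begin

text \<open>Paths of the simple symmetric random walk of length n (each has probability 2^-n).\<close>
definition srw_paths :: "nat \<Rightarrow> int list set" where
  "srw_paths n = {s. length s = n \<and> set s \<subseteq> {-1, 1}}"

definition Spos :: "int list \<Rightarrow> nat \<Rightarrow> int" where
  "Spos s k = sum_list (take k s)"

text \<open>q T j n = P(tau_1^T = n, eps_1^T = j), for j an integer.\<close>
definition qT :: "nat \<Rightarrow> int \<Rightarrow> nat \<Rightarrow> real" where
  "qT T j n = (if n = 0 then 0 else
     real (card {s \<in> srw_paths n. (\<forall>k\<in>{1..<n}. \<not> (int T dvd Spos s k)) \<and> Spos s n = j * int T})
     / 2 ^ n)"

text \<open>P(tau_1^T = n).\<close>
definition ptau :: "nat \<Rightarrow> nat \<Rightarrow> real" where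
  "ptau T n = (if n = 0 then 0 else
     real (card {s \<in> srw_paths n. (\<forall>k\<in>{1..<n}. \<not> (int T dvd Spos s k)) \<and> int T dvd Spos s n})
     / 2 ^ n)"

definition Q1 :: "nat \<Rightarrow> real \<Rightarrow> real" where
  "Q1 T l = (\<Sum>n. exp (- l * real n) * qT T 1 n)"

text \<open>phi(delta,T): the unique real lambda with E[exp(-lambda tau)] = exp(-delta)
  (the series converging to exp(-delta)).\<close>
definition phi :: "real \<Rightarrow> nat \<Rightarrow> real" where
  "phi \<delta> T = (THE l. (\<lambda>n. exp (- l * real n) * ptau T n) sums exp (- \<delta>))"

definition c_delta :: "real \<Rightarrow> real" where
  "c_delta \<delta> = \<delta> / 2 + ln (sqrt (2 - exp (- \<delta>)))"

text \<open>The law of (xi_1, eps_1) under P_{delta,T}.\<close>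
definition step_pmf :: "real \<Rightarrow> nat \<Rightarrow> (nat \<times> int) pmf" where
  "step_pmf \<delta> T = embed_pmf (\<lambda>(n, j).
     if n \<ge> 1 \<and> j \<in> {-1, 0, 1}
     then exp \<delta> * qT T \<bar>j\<bar> n * exp (- phi \<delta> T * real n) else 0)"

definition Y_law :: "real \<Rightarrow> nat \<Rightarrow> nat \<Rightarrow> int pmf" where
  "Y_law \<delta> T N = map_pmf (\<lambda>f. \<Sum>i\<in>{1..N}. snd (f i))
     (Pi_pmf {1..N} (0, 0) (\<lambda>_. step_pmf \<delta> T))"

end

theory Submission
  imports Defs
begin

(*
  Each increment eps_i of Y_N takes values in {-1,0,1}, symmetrically, with
  P(eps = 1) = P(eps = -1) = e^delta Q^1_T(phi(delta,T)).  Hence Y_N is a sum of N i.i.d.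
  symmetric ternary variables of variance a_N = 2 e^delta Q^1_T(phi), and the characteristic
  function of Y_N / sqrt(a_N N) is (1 - a_N + a_N cos(t / sqrt(a_N N)))^N, which tends to
  exp(-t^2/2) as soon as a_N N -> infinity.  The work is to control a_N:

  1. First-passage counting.  For the walk started off TZ, the generating functions
     sum_n r^n #(paths of length n first hitting TZ at a target) satisfy a second-order linear
     recurrence; with r = 1/(2 cosh theta) it is solved by sinh, which gives closed forms for
     Q^1_T, Q^0_T and Q_T at lambda = ln cosh theta.
  2. Identification of phi.  Q_T(ln cosh theta) = 1 - tanh theta tanh(theta T/2), so
     phi(delta,T) = ln cosh theta_T, where tanh theta_T tanh(theta_T T/2) = 1 - e^{-delta}.
  3. Asymptotics.  theta_T decreases to c_delta (tanh c_delta = 1 - e^{-delta}) with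
     T (theta_T - c_delta) bounded, whence a_N >= K e^{-c_delta T_N}; the hypothesis on T_N
     turns this into a_N N -> infinity.
  4. The law of eps under P_{delta,T} is computed from the closed forms of step 1.
  5. A Levy-continuity CLT for symmetric ternary triangular arrays concludes.
*)

section \<open>Counting first-passage paths\<close>

definition avoid_paths :: "nat \<Rightarrow> (int \<Rightarrow> bool) \<Rightarrow> int \<Rightarrow> nat \<Rightarrow> int list set" where
  "avoid_paths T P x n =
     {s \<in> srw_paths n. (\<forall>k\<in>{1..<n}. \<not> int T dvd (x + Spos s k)) \<and> P (x + Spos s n)}"

definition avoid_count :: "nat \<Rightarrow> (int \<Rightarrow> bool) \<Rightarrow> int \<Rightarrow> nat \<Rightarrow> real" where
  "avoid_count T P x n = real (card (avoid_paths T P x n))"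

text \<open>Number of paths from y that hit the target at time n without touching TZ before,
  time 0 included: a start on TZ is killed at once.  This is the quantity obeying the
  one-step recurrence.\<close>
definition hit_count :: "nat \<Rightarrow> (int \<Rightarrow> bool) \<Rightarrow> int \<Rightarrow> nat \<Rightarrow> real" where
  "hit_count T P y n =
     (if int T dvd y then (if n = 0 \<and> P y then 1 else 0) else avoid_count T P y n)"

definition hit_paths :: "nat \<Rightarrow> (int \<Rightarrow> bool) \<Rightarrow> int \<Rightarrow> nat \<Rightarrow> int list set" where
  "hit_paths T P y n = {s \<in> srw_paths n. (n \<ge> 1 \<longrightarrow> \<not> int T dvd y) \<and>
      (\<forall>k\<in>{1..<n}. \<not> int T dvd (y + Spos s k)) \<and> P (y + Spos s n)}"

lemma srw_paths_lists: "srw_paths n = {xs. set xs \<subseteq> {-1,1} \<and> length xs = n}"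
  by (auto simp: srw_paths_def)

lemma finite_srw_paths: "finite (srw_paths n)"
  by (simp add: srw_paths_lists finite_lists_length_eq)

lemma card_srw_paths: "card (srw_paths n) = 2 ^ n"
  by (simp add: srw_paths_lists card_lists_length_eq numeral_2_eq_2)

lemma hit_count_bound: "\<bar>hit_count T P x n\<bar> \<le> 2 ^ n"
proof -
  have "card (avoid_paths T P x n) \<le> card (srw_paths n)"
    by (rule card_mono[OF finite_srw_paths]) (auto simp: avoid_paths_def)
  then have "avoid_count T P x n \<le> 2 ^ n"
    unfolding avoid_count_def card_srw_paths by (metis of_nat_le_iff of_nat_numeral of_nat_power)
  then show ?thesis by (auto simp: hit_count_def avoid_count_def)
qed

lemma Spos_Cons_Suc: "Spos (a # s) (Suc k) = a + Spos s k"
  by (simp add: Spos_def)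

lemma ball_atLeastLessThan_Suc_shift:
  "(\<forall>k\<in>{1..<Suc n}. Q k) \<longleftrightarrow> (1 \<le> n \<longrightarrow> Q 1) \<and> (\<forall>k\<in>{1..<n}. Q (Suc k))"
proof
  assume R: "(1 \<le> n \<longrightarrow> Q 1) \<and> (\<forall>k\<in>{1..<n}. Q (Suc k))"
  show "\<forall>k\<in>{1..<Suc n}. Q k"
  proof
    fix k assume k: "k \<in> {1..<Suc n}"
    then obtain j where "k = Suc j" by (cases k) auto
    with k R show "Q k" by (cases j) auto
  qed
qed auto

lemma avoids_Cons:
  "(\<forall>k\<in>{1..<Suc n}. \<not> int T dvd (x + Spos (a # s) k)) \<longleftrightarrow>
     (n \<ge> 1 \<longrightarrow> \<not> int T dvd (x + a)) \<and> (\<forall>k\<in>{1..<n}. \<not> int T dvd (x + a + Spos s k))"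
  unfolding ball_atLeastLessThan_Suc_shift by (simp add: Spos_Cons_Suc add.assoc Spos_def)

lemma avoid_paths_Suc:
  "avoid_paths T P x (Suc n) =
     (\<lambda>s. 1 # s) ` hit_paths T P (x+1) n \<union> (\<lambda>s. (-1) # s) ` hit_paths T P (x-1) n"
proof (rule set_eqI)
  fix s
  show "s \<in> avoid_paths T P x (Suc n) \<longleftrightarrow>
          s \<in> (\<lambda>s. 1 # s) ` hit_paths T P (x+1) n \<union> (\<lambda>s. (-1) # s) ` hit_paths T P (x-1) n"
  proof (cases s)
    case Nil then show ?thesis by (auto simp: avoid_paths_def hit_paths_def srw_paths_def)
  next
    case (Cons a s')
    have "x + Spos (a # s') (Suc n) = x + a + Spos s' n" by (simp add: Spos_Cons_Suc)
    then show ?thesis using Cons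
      by (simp only: avoid_paths_def hit_paths_def mem_Collect_eq avoids_Cons)
         (auto simp: srw_paths_def)
  qed
qed

lemma card_hit_paths: "real (card (hit_paths T P y n)) = hit_count T P y n"
proof (cases "int T dvd y")
  case True
  then have "hit_paths T P y n = (if n = 0 \<and> P y then {[]} else {})"
    by (cases n) (auto simp: hit_paths_def srw_paths_def Spos_def)
  then show ?thesis using True by (simp add: hit_count_def)
next
  case False
  then have "hit_paths T P y n = avoid_paths T P y n" by (auto simp: hit_paths_def avoid_paths_def)
  then show ?thesis using False by (simp add: hit_count_def avoid_count_def)
qed

lemma avoid_count_Suc: "avoid_count T P x (Suc n) = hit_count T P (x+1) n + hit_count T P (x-1) n"
proof -
  have fin: "finite (hit_paths T P y n)" for y
    by (rule finite_subset[OF _ finite_srw_paths[of n]]) (auto simp: hit_paths_def)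
  have "card (avoid_paths T P x (Suc n)) =
          card ((\<lambda>s. 1 # s) ` hit_paths T P (x+1) n) + card ((\<lambda>s. (-1) # s) ` hit_paths T P (x-1) n)"
    unfolding avoid_paths_Suc by (rule card_Un_disjoint) (auto simp: fin)
  also have "\<dots> = card (hit_paths T P (x+1) n) + card (hit_paths T P (x-1) n)"
    by (simp add: card_image inj_on_def)
  finally show ?thesis unfolding avoid_count_def using card_hit_paths[of T P] by simp
qed

section \<open>Generating functions of first passages\<close>

lemma sinh_recurrence:
  fixes g :: "int \<Rightarrow> real" and \<theta> :: real and T :: nat
  assumes rec: "\<And>x. 0 < x \<Longrightarrow> x < int T \<Longrightarrow> g (x+1) = 2 * cosh \<theta> * g x - g (x-1)"
  shows "k \<le> T \<Longrightarrow> g (int k) * sinh \<theta> = g 1 * sinh (\<theta> * k) - g 0 * sinh (\<theta> * (real k - 1))"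
proof (induction k rule: less_induct)
  case (less k)
  show ?case
  proof (cases "k \<le> 1")
    case True
    then consider "k = 0" | "k = 1" by linarith
    then show ?thesis by cases (auto simp: algebra_simps)
  next
    case False
    then obtain j where j: "k = Suc (Suc j)" by (intro that[of "k - 2"]) simp
    have IH1: "g (int (Suc j)) * sinh \<theta> = g 1 * sinh (\<theta> * real (Suc j)) - g 0 * sinh (\<theta> * real j)"
      using less.IH[of "Suc j"] less.prems j by simp
    have IH0: "g (int j) * sinh \<theta> = g 1 * sinh (\<theta> * real j) - g 0 * sinh (\<theta> * (real j - 1))"
      using less.IH[of j] less.prems j by simp
    have step: "g (int k) = 2 * cosh \<theta> * g (int (Suc j)) - g (int j)"
      using rec[of "int (Suc j)"] less.prems j by simp
    have sinh_step: "sinh (a + \<theta>) = 2 * cosh \<theta> * sinh a - sinh (a - \<theta>)" for a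
      by (simp add: sinh_add sinh_diff algebra_simps)
    have s1: "sinh (\<theta> * real k) = 2 * cosh \<theta> * sinh (\<theta> * real (Suc j)) - sinh (\<theta> * real j)"
      using sinh_step[of "\<theta> * real (Suc j)"] j by (simp add: algebra_simps)
    have s2: "sinh (\<theta> * (real k - 1)) = 2 * cosh \<theta> * sinh (\<theta> * real j) - sinh (\<theta> * (real j - 1))"
      using sinh_step[of "\<theta> * real j"] j by (simp add: algebra_simps)
    have "g (int k) * sinh \<theta> = 2 * cosh \<theta> * (g (int (Suc j)) * sinh \<theta>) - g (int j) * sinh \<theta>"
      unfolding step by (simp add: algebra_simps)
    also have "\<dots> = g 1 * sinh (\<theta> * k) - g 0 * sinh (\<theta> * (real k - 1))"
      unfolding IH1 IH0 s1 s2 by (simp add: algebra_simps)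
    finally show ?thesis .
  qed
qed

corollary sinh_recurrence_boundary:
  fixes g :: "int \<Rightarrow> real" and \<theta> :: real and T :: nat
  assumes rec: "\<And>x. 0 < x \<Longrightarrow> x < int T \<Longrightarrow> g (x+1) = 2 * cosh \<theta> * g x - g (x-1)"
    and "\<theta> > 0" and "T \<ge> 1"
  shows "g 1 = (g (int T) * sinh \<theta> + g 0 * sinh (\<theta> * (real T - 1))) / sinh (\<theta> * T)"
proof -
  have "sinh (\<theta> * T) \<noteq> 0" using assms by simp
  with sinh_recurrence[OF rec order_refl] show ?thesis by (simp add: field_simps)
qed

definition hit_gf :: "nat \<Rightarrow> (int \<Rightarrow> bool) \<Rightarrow> real \<Rightarrow> int \<Rightarrow> real" where
  "hit_gf T P r x = (\<Sum>n. r ^ n * hit_count T P x n)"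

lemma hit_gf_sums:
  assumes "0 \<le> r" "r < 1/2"
  shows "(\<lambda>n. r ^ n * hit_count T P x n) sums hit_gf T P r x"
  unfolding hit_gf_def
proof (rule summable_sums, rule summable_comparison_test[where g = "\<lambda>n. (2*r)^n"])
  have "r ^ n * \<bar>hit_count T P x n\<bar> \<le> r ^ n * 2 ^ n" for n
    using hit_count_bound[of T P x n] assms by (intro mult_left_mono) auto
  then show "\<exists>N. \<forall>n\<ge>N. norm (r ^ n * hit_count T P x n) \<le> (2 * r) ^ n"
    using assms by (simp add: abs_mult power_mult_distrib mult.commute)
  show "summable (\<lambda>n. (2 * r) ^ n)" using assms by (intro summable_geometric) auto
qed

lemma hit_gf_on_TZ:
  assumes "int T dvd x"
  shows "hit_gf T P r x = of_bool (P x)"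
proof -
  have terms: "(\<lambda>n. r ^ n * hit_count T P x n) = (\<lambda>n. if n = 0 then of_bool (P x) else 0)"
    using assms by (auto simp: hit_count_def fun_eq_iff)
  show ?thesis unfolding hit_gf_def terms by (subst suminf_finite[of "{0}"]) auto
qed

text \<open>Off TZ, first-step analysis gives the harmonic-type recurrence (targets lie on TZ, so
  a path of length 0 started off TZ never counts).\<close>
lemma hit_gf_step:
  assumes "0 \<le> r" "r < 1/2" "\<not> int T dvd x" "\<forall>y. P y \<longrightarrow> int T dvd y"
  shows "hit_gf T P r x = r * (hit_gf T P r (x+1) + hit_gf T P r (x-1))"
proof -
  have "(\<lambda>n. r * (r ^ n * hit_count T P (x+1) n) + r * (r ^ n * hit_count T P (x-1) n)) sums
        (r * hit_gf T P r (x+1) + r * hit_gf T P r (x-1))"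
    by (intro sums_add sums_mult hit_gf_sums assms)
  moreover have "(\<lambda>n. r * (r ^ n * hit_count T P (x+1) n) + r * (r ^ n * hit_count T P (x-1) n)) =
       (\<lambda>n. r ^ Suc n * hit_count T P x (Suc n))"
    using assms(3) by (auto simp: fun_eq_iff hit_count_def avoid_count_Suc algebra_simps)
  ultimately have "(\<lambda>n. r ^ n * hit_count T P x n) sums
      (r * hit_gf T P r (x+1) + r * hit_gf T P r (x-1) + r ^ 0 * hit_count T P x 0)"
    by (intro sums_Suc) simp
  moreover have "hit_count T P x 0 = 0"
    using assms(3,4) by (auto simp: hit_count_def avoid_count_def avoid_paths_def srw_paths_def Spos_def)
  ultimately show ?thesis unfolding hit_gf_def by (simp add: sums_iff algebra_simps)
qed

lemma hit_gf_next_to_origin: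
  fixes T :: nat and \<theta> :: real
  defines "r \<equiv> 1 / (2 * cosh \<theta>)"
  assumes T: "T \<ge> 1" and th: "\<theta> > 0" and P: "\<forall>y. P y \<longrightarrow> int T dvd y"
  shows "hit_gf T P r 1 = (of_bool (P (int T)) * sinh \<theta> + of_bool (P 0) * sinh (\<theta> * (real T - 1))) / sinh (\<theta> * T)"
    and "hit_gf T P r (-1) = (of_bool (P (- int T)) * sinh \<theta> + of_bool (P 0) * sinh (\<theta> * (real T - 1))) / sinh (\<theta> * T)"
proof -
  have c: "cosh \<theta> > 1" using cosh_real_strict_mono[of 0 \<theta>] th by simp
  then have r: "0 \<le> r" "r < 1/2" by (auto simp: r_def field_simps)
  have rec: "hit_gf T P r (x+1) = 2 * cosh \<theta> * hit_gf T P r x - hit_gf T P r (x-1)"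
    if "\<not> int T dvd x" for x
    using hit_gf_step[OF r that P] c by (simp add: r_def field_simps)
  have off_TZ: "\<not> int T dvd x" if "0 < x" "x < int T" for x :: int
    using that zdvd_imp_le by fastforce
  have "hit_gf T P r 1 = (hit_gf T P r (int T) * sinh \<theta> + hit_gf T P r 0 * sinh (\<theta> * (real T - 1))) / sinh (\<theta> * T)"
    by (rule sinh_recurrence_boundary[OF _ th T]) (intro rec off_TZ; assumption)
  then show "hit_gf T P r 1 = (of_bool (P (int T)) * sinh \<theta> + of_bool (P 0) * sinh (\<theta> * (real T - 1))) / sinh (\<theta> * T)"
    by (simp add: hit_gf_on_TZ)
  have "(\<lambda>x. hit_gf T P r (-x)) 1 = ((\<lambda>x. hit_gf T P r (-x)) (int T) * sinh \<theta>
          + (\<lambda>x. hit_gf T P r (-x)) 0 * sinh (\<theta> * (real T - 1))) / sinh (\<theta> * T)"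
  proof (rule sinh_recurrence_boundary[OF _ th T])
    fix x :: int assume "0 < x" "x < int T"
    then have "\<not> int T dvd (-x)" using off_TZ by simp
    have shift: "- (x + 1) = - x - 1" "- (x - 1) = - x + 1" by simp_all
    from rec[OF \<open>\<not> int T dvd (-x)\<close>]
    show "hit_gf T P r (- (x + 1)) = 2 * cosh \<theta> * hit_gf T P r (- x) - hit_gf T P r (- (x - 1))"
      unfolding shift by linarith
  qed
  then show "hit_gf T P r (-1) = (of_bool (P (- int T)) * sinh \<theta> + of_bool (P 0) * sinh (\<theta> * (real T - 1))) / sinh (\<theta> * T)"
    by (simp add: hit_gf_on_TZ)
qed

lemma first_passage_transform:
  fixes T :: nat and \<theta> :: real
  assumes T: "T \<ge> 1" and th: "\<theta> > 0" and P: "\<forall>y. P y \<longrightarrow> int T dvd y"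
  shows "(\<lambda>n. exp (- ln (cosh \<theta>) * real n) * (if n = 0 then 0 else avoid_count T P 0 n / 2^n)) sums
     (((of_bool (P (int T)) + of_bool (P (- int T))) * sinh \<theta> + 2 * of_bool (P 0) * sinh (\<theta> * (real T - 1)))
       / (2 * cosh \<theta> * sinh (\<theta> * T)))"
proof -
  define r where "r = 1 / (2 * cosh \<theta>)"
  have c: "cosh \<theta> > 1" using cosh_real_strict_mono[of 0 \<theta>] th by simp
  then have r: "0 \<le> r" "r < 1/2" by (auto simp: r_def field_simps)
  have exp_eq: "exp (- ln (cosh \<theta>) * real n) = (2 * r) ^ n" for n
  proof -
    have "exp (ln (cosh \<theta>) * real n) = cosh \<theta> ^ n"
      using c exp_of_nat_mult[of n "ln (cosh \<theta>)"] by (simp add: mult.commute)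
    then show ?thesis by (simp add: r_def exp_minus inverse_eq_divide power_one_over)
  qed
  define f where "f n = (2 * r) ^ n * (if n = 0 then 0 else avoid_count T P 0 n / 2^n)" for n
  have "(\<lambda>n. r * (r ^ n * hit_count T P (0+1) n) + r * (r ^ n * hit_count T P (0-1) n)) sums
        (r * hit_gf T P r (0+1) + r * hit_gf T P r (0-1))"
    by (intro sums_add sums_mult hit_gf_sums r)
  moreover have "(\<lambda>n. r * (r ^ n * hit_count T P (0+1) n) + r * (r ^ n * hit_count T P (0-1) n)) = (\<lambda>n. f (Suc n))"
  proof
    fix n
    have "f (Suc n) = r ^ Suc n * (hit_count T P 1 n + hit_count T P (-1) n)"
      unfolding f_def by (simp add: avoid_count_Suc[of T P 0] power_mult_distrib)
    then show "r * (r ^ n * hit_count T P (0+1) n) + r * (r ^ n * hit_count T P (0-1) n) = f (Suc n)"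
      by (simp add: algebra_simps)
  qed
  ultimately have "f sums (r * (hit_gf T P r 1 + hit_gf T P r (-1)) + f 0)"
    by (intro sums_Suc) (simp add: algebra_simps)
  moreover have "r * (hit_gf T P r 1 + hit_gf T P r (-1)) =
     ((of_bool (P (int T)) + of_bool (P (- int T))) * sinh \<theta> + 2 * of_bool (P 0) * sinh (\<theta> * (real T - 1)))
       / (2 * cosh \<theta> * sinh (\<theta> * T))"
    using c T th unfolding r_def hit_gf_next_to_origin[OF T th P] by (simp add: field_simps)
  moreover have "f 0 = 0" by (simp add: f_def)
  moreover have "(\<lambda>n. exp (- ln (cosh \<theta>) * real n) * (if n = 0 then 0 else avoid_count T P 0 n / 2^n)) = f"
    unfolding f_def exp_eq ..
  ultimately show ?thesis by (simp only: add_0_right)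
qed

section \<open>Closed forms of the first-passage transforms and of phi\<close>

lemma qT_avoid_count: "qT T j n = (if n = 0 then 0 else avoid_count T (\<lambda>z. z = j * int T) 0 n / 2^n)"
  by (simp add: qT_def avoid_count_def avoid_paths_def)

lemma ptau_avoid_count: "ptau T n = (if n = 0 then 0 else avoid_count T (\<lambda>z. int T dvd z) 0 n / 2^n)"
  by (simp add: ptau_def avoid_count_def avoid_paths_def)

lemma ptau_nonneg: "ptau T n \<ge> 0"
  by (simp add: ptau_def)

lemma qT_nonneg: "qT T j n \<ge> 0"
  by (simp add: qT_def)

lemma laplace_qT1:
  assumes "T \<ge> 1" "\<theta> > 0"
  shows "(\<lambda>n. exp (- ln (cosh \<theta>) * real n) * qT T 1 n) sums (sinh \<theta> / (2 * cosh \<theta> * sinh (\<theta> * T)))"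
  using first_passage_transform[OF assms, of "\<lambda>z. z = 1 * int T"] assms
  by (simp add: qT_avoid_count)

lemma laplace_qT0:
  assumes "T \<ge> 1" "\<theta> > 0"
  shows "(\<lambda>n. exp (- ln (cosh \<theta>) * real n) * qT T 0 n) sums
           (sinh (\<theta> * (real T - 1)) / (cosh \<theta> * sinh (\<theta> * T)))"
  using first_passage_transform[OF assms, of "\<lambda>z. z = 0 * int T"] assms
  by (simp add: qT_avoid_count)

text \<open>The complement 1 - Q_T(ln cosh theta) of the Laplace transform of tau^T_1.\<close>
definition Qdefect :: "nat \<Rightarrow> real \<Rightarrow> real" where
  "Qdefect T \<theta> = tanh \<theta> * tanh (\<theta> * T / 2)"

text \<open>The hyperbolic identity behind Q_T(ln cosh theta) = 1 - Qdefect T theta.\<close>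
lemma Qdefect_closed_form:
  assumes "T \<ge> 1" "\<theta> > 0"
  shows "(sinh \<theta> + sinh (\<theta> * (real T - 1))) / (cosh \<theta> * sinh (\<theta> * T)) = 1 - Qdefect T \<theta>"
proof -
  define A where "A = \<theta> * T / 2"
  have A: "sinh A > 0" "cosh A > 0" using assms by (simp_all add: A_def)
  have "cosh A ^ 2 = sinh A ^ 2 + 1" by (rule cosh_square_eq)
  then have sinh_T_minus_1: "sinh (2*A - \<theta>) = 2 * sinh A * cosh A * cosh \<theta> - (2 * sinh A ^ 2 + 1) * sinh \<theta>"
    by (simp add: sinh_diff sinh_double cosh_double)
  have e: "\<theta> * T = 2 * A" "\<theta> * (real T - 1) = 2 * A - \<theta>" by (simp_all add: A_def algebra_simps)
  have "cosh \<theta> > 0" by simp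
  then show ?thesis unfolding Qdefect_def e sinh_T_minus_1 sinh_double tanh_def A_def[symmetric] using A
    by (simp add: field_simps power2_eq_square)
qed

lemma laplace_ptau:
  assumes "T \<ge> 1" "\<theta> > 0"
  shows "(\<lambda>n. exp (- ln (cosh \<theta>) * real n) * ptau T n) sums (1 - Qdefect T \<theta>)"
proof -
  have "(2 * a + 2 * b) / (2 * c * d) = (a + b) / (c * d)" for a b c d :: real
    by (metis (no_types) distrib_left mult.assoc mult_divide_mult_cancel_left_if zero_neq_numeral)
  with Qdefect_closed_form[OF assms]
  have "(2 * sinh \<theta> + 2 * sinh (\<theta> * (real T - 1))) / (2 * cosh \<theta> * sinh (\<theta> * T)) = 1 - Qdefect T \<theta>"
    by simp
  then show ?thesis
    using first_passage_transform[OF assms, of "\<lambda>z. int T dvd z"] by (simp add: ptau_avoid_count)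
qed

lemma Qdefect_strict_mono:
  assumes "0 < a" "a < b" "T \<ge> 1"
  shows "Qdefect T a < Qdefect T b"
proof -
  have "tanh a < tanh b" "tanh (a * T / 2) < tanh (b * T / 2)" "tanh a > 0" "tanh (a * T / 2) > 0"
    using assms by (simp_all add: divide_strict_right_mono mult_strict_right_mono)
  then show ?thesis unfolding Qdefect_def
    by (meson le_less_trans mult_strict_mono less_imp_le)
qed

lemma Qdefect_surj:
  fixes t :: real
  assumes "0 < t" "t < 1" "T \<ge> 2"
  obtains \<theta> where "\<theta> > 0" "Qdefect T \<theta> = t"
proof -
  have "sqrt t < 1" using assms by simp
  then have "eventually (\<lambda>x. tanh x > sqrt t) at_top"
    using tanh_real_at_top order_tendstoD(1) by blast
  then obtain x0 where x0: "\<And>x. x \<ge> x0 \<Longrightarrow> tanh x > sqrt t" by (auto simp: eventually_at_top_linorder)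
  define b where "b = max x0 1"
  have b: "b > 0" "tanh b > sqrt t" using x0[of b] by (auto simp: b_def)
  have "tanh (b * T / 2) \<ge> tanh b" using b assms by simp
  then have "Qdefect T b \<ge> tanh b * tanh b" unfolding Qdefect_def using b
    by (intro mult_left_mono) (auto intro: less_imp_le)
  moreover have "tanh b * tanh b > sqrt t * sqrt t" using b assms
    by (intro mult_strict_mono) auto
  ultimately have "Qdefect T b \<ge> t" using assms by simp
  moreover have "continuous_on {0..b} (Qdefect T)" unfolding Qdefect_def
    by (intro continuous_intros) auto
  ultimately obtain x where x: "0 \<le> x" "x \<le> b" "Qdefect T x = t"
    using IVT'[of "Qdefect T" 0 t b] b assms by (auto simp: Qdefect_def)
  then have "x \<noteq> 0" using assms by (auto simp: Qdefect_def)
  with x show ?thesis by (intro that[of x]) auto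
qed

text \<open>Uniqueness: a positive root is ln cosh of some theta' and Qdefect is injective; a
  nonpositive root is impossible, since the series would dominate its value at a point
  where it exceeds e^{-delta}.\<close>
lemma phi_eq_ln_cosh:
  assumes d: "\<delta> > 0" and T: "T \<ge> 2" and th: "\<theta> > 0" and k: "Qdefect T \<theta> = 1 - exp (- \<delta>)"
  shows "phi \<delta> T = ln (cosh \<theta>)"
  unfolding phi_def
proof (rule the_equality)
  have T1: "T \<ge> 1" using T by simp
  show "(\<lambda>n. exp (- ln (cosh \<theta>) * real n) * ptau T n) sums exp (- \<delta>)"
    using laplace_ptau[OF T1 th] k by simp
  fix l assume L: "(\<lambda>n. exp (- l * real n) * ptau T n) sums exp (- \<delta>)"
  show "l = ln (cosh \<theta>)"
  proof (cases "l > 0")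
    case True
    define \<theta>' where "\<theta>' = arcosh (exp l)"
    have "exp l > 1" using True by simp
    then have \<theta>': "cosh \<theta>' = exp l" "\<theta>' > 0" by (simp_all add: \<theta>'_def)
    then have "(\<lambda>n. exp (- l * real n) * ptau T n) sums (1 - Qdefect T \<theta>')"
      using laplace_ptau[OF T1 \<theta>'(2)] by simp
    with L k have "Qdefect T \<theta>' = Qdefect T \<theta>" using sums_unique2 by fastforce
    then have "\<theta>' = \<theta>" using Qdefect_strict_mono[OF \<theta>'(2) _ T1] Qdefect_strict_mono[OF th _ T1]
      by (metis linorder_neqE_linordered_idom order_less_irrefl)
    then show ?thesis using \<theta>' by simp
  next
    case False
    have e: "0 < exp (- \<delta>)" "exp (- \<delta>) < 1" using d by simp_all
    have t: "0 < (1 - exp (- \<delta>)) / 2" "(1 - exp (- \<delta>)) / 2 < 1" using e by argo+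
    obtain \<psi> where \<psi>: "\<psi> > 0" "Qdefect T \<psi> = (1 - exp (- \<delta>)) / 2"
      using Qdefect_surj[OF t T] .
    have "1 - Qdefect T \<psi> \<le> exp (- \<delta>)"
    proof (rule sums_le[OF _ laplace_ptau[OF T1 \<psi>(1)] L])
      fix n
      have "l \<le> ln (cosh \<psi>)" using False ln_ge_zero[OF cosh_real_ge_1[of \<psi>]] by linarith
      then have "- ln (cosh \<psi>) * real n \<le> - l * real n" by (intro mult_right_mono) auto
      then show "exp (- ln (cosh \<psi>) * real n) * ptau T n \<le> exp (- l * real n) * ptau T n"
        using ptau_nonneg by (intro mult_right_mono) auto
    qed
    with \<psi>(2) e(2) show ?thesis by argo
  qed
qed

section \<open>Asymptotics of the tilted crossing probability\<close>

lemma Q1_at_phi: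
  assumes "\<delta> > 0" "T \<ge> 2" "\<theta> > 0" "Qdefect T \<theta> = 1 - exp (- \<delta>)"
  shows "Q1 T (phi \<delta> T) = sinh \<theta> / (2 * cosh \<theta> * sinh (\<theta> * T))"
  using laplace_qT1[of T \<theta>] assms unfolding Q1_def phi_eq_ln_cosh[OF assms] by (simp add: sums_iff)

text \<open>c_delta is the limit of theta_T: tanh c_delta = 1 - e^{-delta} = lim Qdefect T.\<close>
lemma c_delta_props:
  assumes d: "\<delta> > 0"
  shows "tanh (c_delta \<delta>) = 1 - exp (- \<delta>)" "c_delta \<delta> > 0"
proof -
  define u where "u = 2 - exp (- \<delta>)"
  have ed: "exp (- \<delta>) < 1" "exp (-\<delta>) > 0" using d by auto
  have u: "u > 1" using ed by (simp add: u_def)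
  have cd: "c_delta \<delta> = \<delta>/2 + ln u / 2" unfolding c_delta_def u_def[symmetric] using u by (simp add: ln_sqrt)
  have "exp (- 2 * c_delta \<delta>) = exp (- \<delta>) * exp (- ln u)"
    unfolding cd by (simp add: exp_add[symmetric] algebra_simps)
  also have "\<dots> = exp (- \<delta>) / u" using u by (simp add: exp_minus inverse_eq_divide)
  finally have e: "exp (- 2 * c_delta \<delta>) = exp (- \<delta>) / u" .
  have "1 - exp (- \<delta>) / u = (u - exp (- \<delta>)) / u" "1 + exp (- \<delta>) / u = (u + exp (- \<delta>)) / u"
    using u by (simp_all add: diff_divide_distrib add_divide_distrib)
  moreover have "u + exp (- \<delta>) > 0" using u ed(2) by linarith
  ultimately have "(1 - exp (- \<delta>) / u) / (1 + exp (- \<delta>) / u) = (u - exp (- \<delta>)) / (u + exp (- \<delta>))"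
    using u by simp
  also have "\<dots> = 1 - exp (- \<delta>)" by (simp add: u_def)
  finally show "tanh (c_delta \<delta>) = 1 - exp (- \<delta>)" unfolding tanh_real_altdef e .
  have "ln u > 0" using u by simp
  then show "c_delta \<delta> > 0" unfolding cd using d by linarith
qed

lemma one_minus_tanh_le: "1 - tanh (x::real) \<le> 2 * exp (- 2 * x)"
proof -
  define e where "e = exp (- 2 * x)"
  have e: "e > 0" by (simp add: e_def)
  have "1 - tanh x = 2 * e / (1 + e)" unfolding tanh_real_altdef e_def[symmetric] using e
    by (simp add: field_simps)
  also have "\<dots> \<le> 2 * e" using e by (simp add: divide_le_eq)
  finally show ?thesis by (simp add: e_def)
qed

lemma artanh_increment_bound:
  fixes a b t y :: real
  assumes ta: "tanh a = t" and tb: "tanh b = y" and ty: "0 < t" "t \<le> y" "y < 1"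
    and far: "1 - y \<ge> (1 - t) / 2"
  shows "2 * (b - a) \<le> (y - t) * (1 + 2 / (1 - t))"
proof -
  have b: "b = ln ((1 + y) / (1 - y)) / 2" using artanh_tanh_real[of b] tb by (simp add: artanh_def)
  have a: "a = ln ((1 + t) / (1 - t)) / 2" using artanh_tanh_real[of a] ta by (simp add: artanh_def)
  have "ln ((1 + y) / (1 - y)) - ln ((1 + t) / (1 - t)) = ln ((1 + y) / (1 + t)) + ln ((1 - t) / (1 - y))"
    using ty by (simp add: ln_div)
  also have "\<dots> \<le> ((1 + y) / (1 + t) - 1) + ((1 - t) / (1 - y) - 1)"
    using ty by (intro add_mono ln_le_minus_one) auto
  also have "(1 + y) / (1 + t) - 1 = (y - t) / (1 + t)" using ty by (simp add: field_simps)
  also have "(1 - t) / (1 - y) - 1 = (y - t) / (1 - y)" using ty by (simp add: field_simps)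
  also have "(y - t) / (1 + t) \<le> (y - t)" using ty by (simp add: divide_le_eq mult_le_cancel_left1)
  also have "(y - t) / (1 - y) \<le> (y - t) / ((1 - t) / 2)" using ty far
    by (intro divide_left_mono) auto
  finally show ?thesis unfolding a b by (simp add: algebra_simps)
qed

text \<open>theta_T approaches c from above at rate O(1/T): the defect 1 - tanh(theta T/2) is
  exponentially small, and artanh is Lipschitz near t.\<close>
lemma theta_bound:
  fixes T :: nat and \<theta> c t :: real
  assumes T: "T \<ge> 2" and th: "\<theta> > 0" and k: "Qdefect T \<theta> = t" and c: "c > 0" "tanh c = t"
    and t: "0 < t" "t < 1" and small: "2 * exp (- real T * c) \<le> (1 - t) / 2"
  shows "real T * (\<theta> - c) \<le> (1 + 2 / (1 - t)) / c" and "c \<le> \<theta>"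
proof -
  have tl: "tanh (\<theta> * T / 2) < 1" by (rule tanh_real_lt_1)
  have "tanh \<theta> * tanh (\<theta> * T / 2) < tanh \<theta> * 1" using th tl by (intro mult_strict_left_mono) auto
  then have "tanh c < tanh \<theta>" using k c by (simp add: Qdefect_def)
  then have ct: "c < \<theta>" by simp
  then show "c \<le> \<theta>" by simp
  have "tanh \<theta> - t = tanh \<theta> * (1 - tanh (\<theta> * T / 2))" using k by (simp add: Qdefect_def algebra_simps)
  also have "\<dots> \<le> 1 * (1 - tanh (c * T / 2))"
    using th tl ct T tanh_real_lt_1[of \<theta>] by (intro mult_mono) (auto simp: divide_right_mono mult_right_mono)
  also have "\<dots> \<le> 2 * exp (- real T * c)"
    using one_minus_tanh_le[of "c * T / 2"] by (simp add: mult.commute)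
  finally have yt: "tanh \<theta> - t \<le> 2 * exp (- real T * c)" .
  have "2 * (\<theta> - c) \<le> (tanh \<theta> - t) * (1 + 2 / (1 - t))"
    using yt small c \<open>tanh c < tanh \<theta>\<close> t
    by (intro artanh_increment_bound[OF c(2) refl]) (auto simp: tanh_real_lt_1)
  also have "\<dots> \<le> 2 * exp (- real T * c) * (1 + 2 / (1 - t))"
    using yt t by (intro mult_right_mono) auto
  finally have d1: "\<theta> - c \<le> exp (- real T * c) * (1 + 2 / (1 - t))" by simp
  have "real T * exp (- real T * c) \<le> 1 / c"
  proof -
    have "real T * c \<le> exp (real T * c)" using exp_ge_add_one_self[of "real T * c"] by linarith
    then show ?thesis using c by (simp add: exp_minus field_simps)
  qed
  moreover have "1 + 2 / (1 - t) \<ge> 0" using t by simp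
  ultimately have "(real T * exp (- real T * c)) * (1 + 2 / (1 - t)) \<le> (1 / c) * (1 + 2 / (1 - t))"
    by (rule mult_right_mono)
  moreover have "real T * (\<theta> - c) \<le> real T * (exp (- real T * c) * (1 + 2 / (1 - t)))"
    using d1 by (intro mult_left_mono) auto
  ultimately show "real T * (\<theta> - c) \<le> (1 + 2 / (1 - t)) / c" by simp
qed

text \<open>The closed form of Q^1_T is comparable to e^{-theta T}, hence to e^{-c T}.\<close>
lemma sinh_ratio_lower:
  fixes T :: nat and \<theta> c t K :: real
  assumes T: "T \<ge> 1" and th: "\<theta> > 0" and tt: "tanh \<theta> \<ge> t" and t: "0 < t"
    and K: "real T * (\<theta> - c) \<le> K"
  shows "2 * t * exp (- K) * exp (- real T * c) \<le> sinh \<theta> / (cosh \<theta> * sinh (\<theta> * T))"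
proof -
  have sp: "sinh (\<theta> * T) > 0" using T th by simp
  have "sinh (\<theta> * T) \<le> exp (\<theta> * T) / 2" unfolding sinh_field_def by (simp add: divide_right_mono)
  have "2 * t * exp (- K) * exp (- real T * c) = 2 * t * exp (- (K + real T * c))"
    by (simp add: exp_add[symmetric] algebra_simps)
  also have "\<dots> \<le> 2 * t * exp (- (\<theta> * T))"
    using K t by (intro mult_left_mono) (auto simp: algebra_simps)
  also have "\<dots> = t / (exp (\<theta> * T) / 2)" by (simp add: exp_minus field_simps)
  also have "\<dots> \<le> t / sinh (\<theta> * T)"
    using sp t \<open>sinh (\<theta> * T) \<le> exp (\<theta> * T) / 2\<close> by (intro divide_left_mono) auto
  also have "\<dots> \<le> tanh \<theta> / sinh (\<theta> * T)" using tt sp by (simp add: divide_right_mono)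
  also have "\<dots> = sinh \<theta> / (cosh \<theta> * sinh (\<theta> * T))" by (simp add: tanh_def)
  finally show ?thesis .
qed

lemma Q1_lower_bound:
  assumes d: "\<delta> > 0"
  obtains K where "K > 0" and "\<And>T. T \<ge> 2 \<Longrightarrow> 4 * exp (- real T * c_delta \<delta>) \<le> exp (- \<delta>) \<Longrightarrow>
      K * exp (- real T * c_delta \<delta>) \<le> 2 * exp \<delta> * Q1 T (phi \<delta> T)"
proof -
  define t where "t = 1 - exp (- \<delta>)"
  define c where "c = c_delta \<delta>"
  have t: "0 < t" "t < 1" using d by (auto simp: t_def)
  have c: "tanh c = t" "c > 0" using c_delta_props[OF d] by (auto simp: c_def t_def)
  define K where "K = (1 + 2 / (1 - t)) / c"
  show ?thesis
  proof (rule that[of "exp \<delta> * (2 * t * exp (- K))"])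
    show "exp \<delta> * (2 * t * exp (- K)) > 0" using t by simp
    fix T :: nat assume T: "T \<ge> 2" and small: "4 * exp (- real T * c_delta \<delta>) \<le> exp (- \<delta>)"
    obtain \<theta> where th: "\<theta> > 0" "Qdefect T \<theta> = t" using Qdefect_surj[OF t T] .
    have "2 * exp (- real T * c) \<le> (1 - t) / 2" using small by (simp add: c_def t_def)
    from theta_bound[OF T th c(2,1) t this]
    have "real T * (\<theta> - c) \<le> K" "tanh c \<le> tanh \<theta>" by (simp_all add: K_def)
    then have "2 * t * exp (- K) * exp (- real T * c) \<le> sinh \<theta> / (cosh \<theta> * sinh (\<theta> * T))"
      using T th c t by (intro sinh_ratio_lower) auto
    also have "\<dots> = 2 * Q1 T (phi \<delta> T)"
      using Q1_at_phi[OF d T th(1)] th(2) by (simp add: t_def)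
    finally show "exp \<delta> * (2 * t * exp (- K)) * exp (- real T * c_delta \<delta>) \<le> 2 * exp \<delta> * Q1 T (phi \<delta> T)"
      by (simp add: c_def mult_ac)
  qed
qed

lemma scaled_variance_to_infinity:
  fixes \<delta> :: real and T :: "nat \<Rightarrow> nat"
  assumes d: "\<delta> > 0" and T: "filterlim T at_top sequentially"
    and growth: "filterlim (\<lambda>N. real (T N) - ln (real N) / c_delta \<delta>) at_bot sequentially"
  shows "filterlim (\<lambda>N. 2 * exp \<delta> * Q1 (T N) (phi \<delta> (T N)) * real N) at_top sequentially"
proof -
  define c where "c = c_delta \<delta>"
  have c: "c > 0" using c_delta_props[OF d] by (simp add: c_def)
  obtain K where K: "K > 0" "\<And>T. T \<ge> 2 \<Longrightarrow> 4 * exp (- real T * c) \<le> exp (- \<delta>) \<Longrightarrow>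
      K * exp (- real T * c) \<le> 2 * exp \<delta> * Q1 T (phi \<delta> T)"
    using Q1_lower_bound[OF d] unfolding c_def by blast
  have "filterlim (\<lambda>N. real (T N) * c) at_top sequentially"
    using c by (intro filterlim_at_top_mult_tendsto_pos[OF tendsto_const]
        filterlim_compose[OF filterlim_real_sequentially T]) auto
  then have "((\<lambda>N. 4 * exp (- real (T N) * c)) \<longlongrightarrow> 4 * 0) sequentially"
    by (intro tendsto_mult tendsto_const filterlim_compose[OF exp_at_bot])
       (simp add: filterlim_uminus_at_bot)
  then have "eventually (\<lambda>N. 4 * exp (- real (T N) * c) < exp (- \<delta>)) sequentially"
    by (rule order_tendstoD(2)) simp
  then have small: "eventually (\<lambda>N. 4 * exp (- real (T N) * c) \<le> exp (- \<delta>)) sequentially"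
    by (rule eventually_mono) simp
  have "filterlim (\<lambda>N. c * - (real (T N) - ln (real N) / c)) at_top sequentially"
    using c growth by (intro filterlim_tendsto_pos_mult_at_top[OF tendsto_const])
      (auto simp: filterlim_uminus_at_top c_def)
  then have "filterlim (\<lambda>N. exp (c * - (real (T N) - ln (real N) / c))) at_top sequentially"
    by (rule filterlim_compose[OF exp_at_top])
  moreover have "eventually (\<lambda>N. exp (c * - (real (T N) - ln (real N) / c)) = real N * exp (- real (T N) * c)) sequentially"
    using eventually_ge_at_top[of 1]
  proof eventually_elim
    case (elim N)
    have "c * - (real (T N) - ln (real N) / c) = ln (real N) + - real (T N) * c"
      using c by (simp add: field_simps)
    moreover have "exp (ln (real N) + - real (T N) * c) = real N * exp (- real (T N) * c)"
      using elim by (simp only: exp_add) simp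
    ultimately show ?case by simp
  qed
  ultimately have "filterlim (\<lambda>N. K * (real N * exp (- real (T N) * c))) at_top sequentially"
    using K(1) by (intro filterlim_tendsto_pos_mult_at_top[OF tendsto_const])
      (auto simp: filterlim_cong[OF refl refl])
  moreover have "eventually (\<lambda>N. K * (real N * exp (- real (T N) * c)) \<le>
      2 * exp \<delta> * Q1 (T N) (phi \<delta> (T N)) * real N) sequentially"
    using small eventually_compose_filterlim[OF eventually_ge_at_top[of 2] T]
  proof eventually_elim
    case (elim N)
    then have "real N * (K * exp (- real (T N) * c)) \<le> real N * (2 * exp \<delta> * Q1 (T N) (phi \<delta> (T N)))"
      using K(2)[of "T N"] by (intro mult_left_mono) auto
    then show ?case by (simp add: mult_ac)
  qed
  ultimately show ?thesis by (rule filterlim_at_top_mono)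
qed

section \<open>The law of the crossing increments\<close>

lemma nn_integral_fibre_sums:
  fixes f :: "nat \<times> int \<Rightarrow> real"
  assumes nn: "\<And>x. f x \<ge> 0" and s: "(\<lambda>n. f (n, j)) sums s"
  shows "(\<integral>\<^sup>+x. ennreal (f x) * indicator {x. snd x = j} x \<partial>count_space UNIV) = ennreal s"
proof -
  have "(\<integral>\<^sup>+x. ennreal (f x) * indicator {x. snd x = j} x \<partial>count_space UNIV) =
        (\<integral>\<^sup>+x. ennreal (f x) \<partial>count_space {x. snd x = j})"
    by (rule nn_integral_count_space_indicator[symmetric]) simp
  also have "\<dots> = (\<integral>\<^sup>+n. ennreal (f (n, j)) \<partial>count_space UNIV)"
    by (rule nn_integral_bij_count_space[symmetric, where g = "\<lambda>n. (n, j)"])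
       (auto simp: bij_betw_def inj_on_def image_def)
  also have "\<dots> = (\<Sum>n. ennreal (f (n, j)))" by (rule nn_integral_count_space_nat)
  also have "\<dots> = ennreal s" by (rule suminf_ennreal_eq) (use nn s in auto)
  finally show ?thesis .
qed

lemma nn_integral_finite_fibres:
  fixes f :: "nat \<times> int \<Rightarrow> real"
  assumes nn: "\<And>x. f x \<ge> 0" and s: "\<And>j. (\<lambda>n. f (n, j)) sums s j"
    and supp: "\<And>x. snd x \<notin> J \<Longrightarrow> f x = 0" and J: "finite J"
  shows "(\<integral>\<^sup>+x. ennreal (f x) \<partial>count_space UNIV) = ennreal (\<Sum>j\<in>J. s j)"
proof -
  have "(\<integral>\<^sup>+x. ennreal (f x) \<partial>count_space UNIV) =
      (\<integral>\<^sup>+x. (\<Sum>j\<in>J. ennreal (f x) * indicator {x. snd x = j} x) \<partial>count_space UNIV)"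
  proof (rule nn_integral_cong)
    fix x :: "nat \<times> int"
    show "ennreal (f x) = (\<Sum>j\<in>J. ennreal (f x) * indicator {x. snd x = j} x)"
    proof (cases "snd x \<in> J")
      case True
      then have "(\<Sum>j\<in>J. ennreal (f x) * indicator {x. snd x = j} x) =
                   (\<Sum>j\<in>{snd x}. ennreal (f x) * indicator {x. snd x = j} x)"
        using J by (intro sum.mono_neutral_right) (auto simp: indicator_def)
      then show ?thesis by simp
    qed (simp add: supp)
  qed
  also have "\<dots> = (\<Sum>j\<in>J. \<integral>\<^sup>+x. ennreal (f x) * indicator {x. snd x = j} x \<partial>count_space UNIV)"
    by (rule nn_integral_sum) simp
  also have "\<dots> = (\<Sum>j\<in>J. ennreal (s j))" using nn_integral_fibre_sums[OF nn s] by simp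
  also have "\<dots> = ennreal (\<Sum>j\<in>J. s j)"
    using sums_le[OF _ sums_zero s] nn by (intro sum_ennreal) auto
  finally show ?thesis .
qed

definition step_weight :: "real \<Rightarrow> nat \<Rightarrow> nat \<times> int \<Rightarrow> real" where
  "step_weight \<delta> T = (\<lambda>(n, j). if n \<ge> 1 \<and> j \<in> {-1, 0, 1}
     then exp \<delta> * qT T \<bar>j\<bar> n * exp (- phi \<delta> T * real n) else 0)"

definition crossing_mass :: "real \<Rightarrow> nat \<Rightarrow> int \<Rightarrow> real" where
  "crossing_mass \<delta> T j =
     (if j \<in> {-1, 0, 1} then exp \<delta> * (\<Sum>n. exp (- phi \<delta> T * real n) * qT T \<bar>j\<bar> n) else 0)"

lemma step_weight_nonneg: "step_weight \<delta> T x \<ge> 0"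
  by (auto simp: step_weight_def qT_nonneg split: prod.splits)

text \<open>With theta as in the identification of phi, all fibre series converge (to closed forms),
  and the masses of {-1, 0, 1} add up to e^delta (1 - Qdefect T theta) = 1.\<close>
lemma crossing_mass_props:
  assumes d: "\<delta> > 0" and T: "T \<ge> 2" and th: "\<theta> > 0" and k: "Qdefect T \<theta> = 1 - exp (- \<delta>)"
  shows step_weight_sums: "(\<lambda>n. step_weight \<delta> T (n, j)) sums crossing_mass \<delta> T j"
    and crossing_mass_total: "(\<Sum>j\<in>{-1,0,1}. crossing_mass \<delta> T j) = 1"
proof -
  have T1: "T \<ge> 1" using T by simp
  note phi = phi_eq_ln_cosh[OF d T th k]
  have laplace: "(\<lambda>n. exp (- phi \<delta> T * real n) * qT T 1 n) sums (sinh \<theta> / (2 * cosh \<theta> * sinh (\<theta> * T)))"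
    "(\<lambda>n. exp (- phi \<delta> T * real n) * qT T 0 n) sums (sinh (\<theta> * (real T - 1)) / (cosh \<theta> * sinh (\<theta> * T)))"
    using laplace_qT1[OF T1 th] laplace_qT0[OF T1 th] by (simp_all add: phi)
  have "(\<lambda>n. step_weight \<delta> T (n, j)) =
          (\<lambda>n. if j \<in> {-1,0,1} then exp \<delta> * (exp (- phi \<delta> T * real n) * qT T \<bar>j\<bar> n) else 0)"
    by (auto simp: fun_eq_iff step_weight_def qT_def mult_ac)
  moreover have "j \<in> {-1,0,1} \<Longrightarrow> summable (\<lambda>n. exp (- phi \<delta> T * real n) * qT T \<bar>j\<bar> n)"
    using laplace by (auto simp: sums_iff)
  ultimately show "(\<lambda>n. step_weight \<delta> T (n, j)) sums crossing_mass \<delta> T j"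
    unfolding crossing_mass_def by (auto intro!: sums_mult summable_sums)
  have "(\<Sum>j\<in>{-1,0,1}. crossing_mass \<delta> T j) =
          exp \<delta> * (2 * (sinh \<theta> / (2 * cosh \<theta> * sinh (\<theta> * T)))
            + sinh (\<theta> * (real T - 1)) / (cosh \<theta> * sinh (\<theta> * T)))"
    using sums_unique[OF laplace(1)] sums_unique[OF laplace(2)] by (simp add: crossing_mass_def algebra_simps)
  also have "\<dots> = exp \<delta> * ((sinh \<theta> + sinh (\<theta> * (real T - 1))) / (cosh \<theta> * sinh (\<theta> * T)))"
    by (simp add: add_divide_distrib)
  also have "\<dots> = 1" using Qdefect_closed_form[OF T1 th] k by (simp add: exp_minus)
  finally show "(\<Sum>j\<in>{-1,0,1}. crossing_mass \<delta> T j) = 1" .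
qed

lemma crossing_law:
  assumes d: "\<delta> > 0" and T: "T \<ge> 2"
  shows "set_pmf (map_pmf snd (step_pmf \<delta> T)) \<subseteq> {-1, 0, 1}"
    and "pmf (map_pmf snd (step_pmf \<delta> T)) 1 = exp \<delta> * Q1 T (phi \<delta> T)"
    and "pmf (map_pmf snd (step_pmf \<delta> T)) (-1) = exp \<delta> * Q1 T (phi \<delta> T)"
    and "exp \<delta> * Q1 T (phi \<delta> T) > 0"
proof -
  have t: "0 < 1 - exp (- \<delta>)" "1 - exp (- \<delta>) < 1" using d by simp_all
  obtain \<theta> where th: "\<theta> > 0" "Qdefect T \<theta> = 1 - exp (- \<delta>)" using Qdefect_surj[OF t T] .
  note sums = step_weight_sums[OF d T th]
  have "(\<integral>\<^sup>+x. ennreal (step_weight \<delta> T x) \<partial>count_space UNIV) = 1"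
    using nn_integral_finite_fibres[OF step_weight_nonneg sums, of "{-1,0,1}"]
      crossing_mass_total[OF d T th] by (auto simp: step_weight_def split: prod.splits)
  then have pmf_step: "pmf (step_pmf \<delta> T) x = step_weight \<delta> T x" for x
    unfolding step_pmf_def step_weight_def[symmetric] by (rule pmf_embed_pmf[OF step_weight_nonneg])
  have "ennreal (pmf (map_pmf snd (step_pmf \<delta> T)) j) =
          (\<integral>\<^sup>+x. indicator (snd -` {j}) x \<partial>measure_pmf (step_pmf \<delta> T))" for j
    by (simp add: pmf_map measure_pmf.emeasure_eq_measure)
  also have "\<dots> j = (\<integral>\<^sup>+x. ennreal (step_weight \<delta> T x) * indicator {x. snd x = j} x \<partial>count_space UNIV)" for j
    unfolding nn_integral_measure_pmf pmf_step by (simp add: vimage_def)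
  also have "\<dots> j = ennreal (crossing_mass \<delta> T j)" for j
    by (rule nn_integral_fibre_sums[OF step_weight_nonneg sums])
  finally have pmf_snd: "pmf (map_pmf snd (step_pmf \<delta> T)) j = crossing_mass \<delta> T j" for j
    using sums_le[OF _ sums_zero sums] step_weight_nonneg by (subst (asm) ennreal_inj) auto
  show "set_pmf (map_pmf snd (step_pmf \<delta> T)) \<subseteq> {-1, 0, 1}"
    by (auto simp: set_pmf_eq pmf_snd crossing_mass_def)
  show "pmf (map_pmf snd (step_pmf \<delta> T)) 1 = exp \<delta> * Q1 T (phi \<delta> T)"
       "pmf (map_pmf snd (step_pmf \<delta> T)) (-1) = exp \<delta> * Q1 T (phi \<delta> T)"
    by (simp_all add: pmf_snd crossing_mass_def Q1_def mult_ac)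
  show "exp \<delta> * Q1 T (phi \<delta> T) > 0"
    using Q1_at_phi[OF d T th] th T by simp
qed

section \<open>A central limit theorem for symmetric ternary arrays\<close>

lemma char_iid_sum:
  fixes p :: "(nat \<times> int) pmf" and s t :: real and N :: nat
  shows "char (distr (measure_pmf (map_pmf (\<lambda>f. \<Sum>i\<in>{1..N}. snd (f i)) (Pi_pmf {1..N} (0, 0) (\<lambda>_. p)))) borel
            (\<lambda>y. real_of_int y / s)) t
       = (CLINT x|measure_pmf p. iexp (t * (real_of_int (snd x) / s))) ^ N"
proof -
  let ?P = "Pi_pmf {1..N} ((0::nat), (0::int)) (\<lambda>_. p)"
  define X where "X i f = real_of_int (snd (f i)) / s" for i and f :: "nat \<Rightarrow> nat \<times> int"
  have "distr (measure_pmf (map_pmf (\<lambda>f. \<Sum>i\<in>{1..N}. snd (f i)) ?P)) borel (\<lambda>y. real_of_int y / s)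
      = distr (measure_pmf ?P) borel (\<lambda>f. \<Sum>i\<in>{1..N}. X i f)"
    unfolding map_pmf_rep_eq
    by (subst distr_distr) (auto simp: comp_def X_def sum_divide_distrib)
  moreover have ind: "prob_space.indep_vars (measure_pmf ?P) (\<lambda>_. borel) X {1..N}"
  proof -
    have "prob_space.indep_vars (measure_pmf ?P) (\<lambda>_. count_space UNIV) (\<lambda>x f. f x) {1..N}"
      by (rule indep_vars_Pi_pmf) simp
    from prob_space.indep_vars_compose2[OF measure_pmf.prob_space_axioms this,
        of "\<lambda>i v. real_of_int (snd v) / s" "\<lambda>_. borel"]
    show ?thesis by (simp add: X_def[abs_def])
  qed
  moreover have "char (distr (measure_pmf ?P) borel (X i)) t =
      (CLINT x|measure_pmf p. iexp (t * (real_of_int (snd x) / s)))" if "i \<in> {1..N}" for i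
  proof -
    have "distr (measure_pmf ?P) borel (X i) =
            distr (measure_pmf (map_pmf (\<lambda>f. f i) ?P)) borel (\<lambda>v. real_of_int (snd v) / s)"
      unfolding map_pmf_rep_eq by (subst distr_distr) (auto simp: comp_def X_def[abs_def])
    also have "map_pmf (\<lambda>f. f i) ?P = p" using that by (simp add: Pi_pmf_component)
    finally show ?thesis by (simp add: char_def integral_distr)
  qed
  ultimately show ?thesis
    using prob_space.char_distr_sum[OF measure_pmf.prob_space_axioms ind, of t] by simp
qed

lemma char_symmetric_ternary:
  fixes p :: "(nat \<times> int) pmf" and a u :: real
  assumes supp: "set_pmf (map_pmf snd p) \<subseteq> {-1, 0, 1}"
    and p1: "pmf (map_pmf snd p) 1 = a / 2" and pm1: "pmf (map_pmf snd p) (-1) = a / 2"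
  shows "(CLINT x|measure_pmf p. iexp (u * real_of_int (snd x))) = complex_of_real (1 - a + a * cos u)"
proof -
  let ?E = "map_pmf snd p"
  have "(\<Sum>j\<in>{-1,0,1}. pmf ?E j) = 1" by (rule sum_pmf_eq_1) (use supp in auto)
  then have p0: "pmf ?E 0 = 1 - a" using p1 pm1 by simp
  have "(CLINT x|measure_pmf p. iexp (u * real_of_int (snd x))) = (CLINT j|measure_pmf ?E. iexp (u * real_of_int j))"
    unfolding map_pmf_rep_eq by (simp add: integral_distr)
  also have "\<dots> = (\<Sum>j\<in>{-1,0,1}. pmf ?E j *\<^sub>R iexp (u * real_of_int j))"
    by (rule integral_measure_pmf) (use supp in auto)
  also have "\<dots> = (a/2) *\<^sub>R iexp (- u) + (1 - a) *\<^sub>R 1 + (a/2) *\<^sub>R iexp u"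
    by (simp add: p0 p1 pm1)
  also have "\<dots> = complex_of_real (1 - a + a * cos u)"
  proof -
    have "exp (- (\<i> * complex_of_real u)) = cis (- u)" by (simp add: cis_conv_exp)
    then show ?thesis by (simp add: complex_eq_iff cis_conv_exp[symmetric] scaleR_conv_of_real)
  qed
  finally show ?thesis .
qed

lemma cos_taylor2_bound: fixes u :: real shows "\<bar>cos u - (1 - u^2/2)\<bar> \<le> u^4 / 24"
proof -
  have A: "cmod (iexp u - (\<Sum>k\<le>3. (\<i> * complex_of_real u)^k / fact k)) \<le> \<bar>u\<bar>^(Suc 3) / fact (Suc 3)"
    by (rule iexp_approx1)
  have S: "(\<Sum>k\<le>3. (\<i> * complex_of_real u)^k / fact k) = Complex (1 - u^2/2) (u - u^3/6)"
    by (simp add: eval_nat_numeral complex_eq_iff fact_numeral power2_eq_square)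
  have F: "\<bar>u\<bar>^(Suc 3) / fact (Suc 3) = u^4 / 24"
  proof -
    have "(fact (Suc 3) :: real) = 24" by (simp add: eval_nat_numeral)
    moreover have "\<bar>u\<bar>^(Suc 3) = u^4" by (simp add: eval_nat_numeral power_abs[symmetric] abs_mult)
    ultimately show ?thesis by simp
  qed
  have "Re (iexp u) = cos u" by (simp add: cis_conv_exp[symmetric])
  then have "\<bar>cos u - (1 - u^2/2)\<bar> \<le> cmod (iexp u - Complex (1 - u^2/2) (u - u^3/6))"
    using abs_Re_le_cmod[of "iexp u - Complex (1 - u^2/2) (u - u^3/6)"] by simp
  with A show ?thesis unfolding S F by linarith
qed

lemma char_power_vs_euler:
  fixes a t :: real and N :: nat
  assumes a: "0 < a" "a \<le> 1" and N: "N \<ge> 1" "real N \<ge> t^2/4"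
  shows "\<bar>(1 - a + a * cos (t / sqrt (a * real N))) ^ N - (1 + (- (t^2) / 2) / real N) ^ N\<bar>
           \<le> t^4 / 24 * inverse (a * real N)"
proof -
  define u where "u = t / sqrt (a * real N)"
  define z where "z = 1 - a + a * cos u"
  define w where "w = 1 + (- (t^2) / 2) / real N"
  have Npos: "real N > 0" using N by simp
  have aN: "a * real N > 0" using a Npos by simp
  have u2: "u^2 = t^2 / (a * real N)" unfolding u_def using aN by (simp add: power_divide)
  have z1: "\<bar>z\<bar> \<le> 1"
  proof -
    have "a * cos u \<le> a * 1" "a * (-1) \<le> a * cos u" using a by (intro mult_left_mono; simp)+
    then show ?thesis unfolding z_def using a by (simp add: abs_le_iff)
  qed
  have w1: "\<bar>w\<bar> \<le> 1"
  proof -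
    have "t^2 / 2 / real N \<le> 2" using N Npos by (simp add: divide_le_eq)
    then show ?thesis unfolding w_def by (simp add: abs_le_iff)
  qed
  have "z - w = a * (cos u - (1 - u^2/2))"
    unfolding z_def w_def u2 using aN a Npos by (simp add: field_simps)
  then have "\<bar>z - w\<bar> \<le> a * (u^4 / 24)"
    using cos_taylor2_bound[of u] a by (simp add: abs_mult mult_left_mono)
  also have "a * (u^4 / 24) = t^4 / 24 / (a * real N^2)"
  proof -
    have "u^4 = (u^2)^2" by simp
    then show ?thesis unfolding u2 using aN a by (simp add: field_simps power2_eq_square eval_nat_numeral)
  qed
  finally have zw: "\<bar>z - w\<bar> \<le> t^4 / 24 / (a * real N^2)" .
  have "\<bar>z ^ N - w ^ N\<bar> \<le> real N * \<bar>z - w\<bar>"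
    using norm_power_diff[of z w N] z1 w1 by simp
  also have "\<dots> \<le> real N * (t^4 / 24 / (a * real N^2))"
    using zw by (intro mult_left_mono) auto
  also have "\<dots> = t^4 / 24 * inverse (a * real N)"
    using Npos a by (simp add: field_simps power2_eq_square)
  finally show ?thesis unfolding z_def u_def w_def .
qed

lemma char_power_limit:
  fixes a :: "nat \<Rightarrow> real" and t :: real
  assumes a: "eventually (\<lambda>N. 0 < a N \<and> a N \<le> 1) sequentially"
    and var: "filterlim (\<lambda>N. a N * real N) at_top sequentially"
  shows "(\<lambda>N. (1 - a N + a N * cos (t / sqrt (a N * real N))) ^ N) \<longlonglongrightarrow> exp (- (t^2) / 2)"
proof -
  define euler where "euler N = (1 + (- (t^2) / 2) / real N) ^ N" for N
  have "eventually (\<lambda>N. N \<ge> max 1 (nat \<lceil>t^2 / 4\<rceil>)) sequentially" by (rule eventually_ge_at_top)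
  with a have close: "eventually (\<lambda>N. norm ((1 - a N + a N * cos (t / sqrt (a N * real N))) ^ N - euler N)
       \<le> t^4 / 24 * inverse (a N * real N)) sequentially"
  proof eventually_elim
    case (elim N)
    then have "0 < a N" "a N \<le> 1" "N \<ge> 1" "real N \<ge> t^2/4" by simp_all
    from char_power_vs_euler[OF this] show ?case by (simp only: real_norm_def euler_def)
  qed
  have "(\<lambda>N. t^4 / 24 * inverse (a N * real N)) \<longlonglongrightarrow> t^4 / 24 * 0"
    by (intro tendsto_mult tendsto_const tendsto_inverse_0_at_top var)
  then have "(\<lambda>N. t^4 / 24 * inverse (a N * real N)) \<longlonglongrightarrow> 0" by simp
  from Lim_null_comparison[OF close this] have "(\<lambda>N. (1 - a N + a N * cos (t / sqrt (a N * real N))) ^ N - euler N) \<longlonglongrightarrow> 0" .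
  moreover have "euler \<longlonglongrightarrow> exp (- (t^2) / 2)" unfolding euler_def by (rule tendsto_exp_limit_sequentially)
  ultimately show ?thesis by (rule Lim_transform[rotated])
qed

text \<open>The standard normal cdf has no atoms, so weak convergence yields convergence at every x.\<close>
lemma std_normal_isCont_cdf: "isCont (cdf std_normal_distribution) x"
proof -
  interpret S: real_distribution std_normal_distribution by (rule real_dist_normal_dist)
  have "emeasure std_normal_distribution {x} = (\<integral>\<^sup>+y. ennreal (std_normal_density y) * indicator {x} y \<partial>lborel)"
    by (subst emeasure_density) auto
  also have "\<dots> = 0" by (subst nn_integral_indicator_singleton) auto
  finally show ?thesis by (simp add: S.isCont_cdf measure_def)
qed

theorem clt_symmetric_ternary:
  fixes p :: "nat \<Rightarrow> (nat \<times> int) pmf" and a :: "nat \<Rightarrow> real" and x :: real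
  assumes law: "eventually (\<lambda>N. set_pmf (map_pmf snd (p N)) \<subseteq> {-1,0,1} \<and> pmf (map_pmf snd (p N)) 1 = a N / 2
      \<and> pmf (map_pmf snd (p N)) (-1) = a N / 2 \<and> a N > 0) sequentially"
    and var: "filterlim (\<lambda>N. a N * real N) at_top sequentially"
  shows "(\<lambda>N. measure_pmf.prob (map_pmf (\<lambda>f. \<Sum>i\<in>{1..N}. snd (f i)) (Pi_pmf {1..N} (0,0) (\<lambda>_. p N)))
      {y. real_of_int y / sqrt (a N * real N) \<le> x}) \<longlonglongrightarrow> measure (density lborel std_normal_density) {..x}"
proof -
  define Y where "Y N = map_pmf (\<lambda>f. \<Sum>i\<in>{1..N}. snd (f i)) (Pi_pmf {1..N} ((0::nat),(0::int)) (\<lambda>_. p N))" for N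
  define M where "M N = distr (measure_pmf (Y N)) borel (\<lambda>y. real_of_int y / sqrt (a N * real N))" for N
  have M: "real_distribution (M N)" for N
    unfolding M_def by (rule prob_space.real_distribution_distr[OF measure_pmf.prob_space_axioms]) simp
  have a: "eventually (\<lambda>N. 0 < a N \<and> a N \<le> 1) sequentially"
    using law
  proof eventually_elim
    case (elim N)
    have "(\<Sum>j\<in>{-1,0,1}. pmf (map_pmf snd (p N)) j) = 1" by (rule sum_pmf_eq_1) (use elim in auto)
    then have "pmf (map_pmf snd (p N)) 0 + a N = 1" using elim by simp
    then show ?case using elim pmf_nonneg[of "map_pmf snd (p N)" 0] by linarith
  qed
  have "weak_conv_m M std_normal_distribution"
  proof (rule levy_continuity[OF M real_dist_normal_dist])
    fix t :: real
    have "eventually (\<lambda>N. char (M N) t = complex_of_real ((1 - a N + a N * cos (t / sqrt (a N * real N))) ^ N)) sequentially"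
      using law
    proof eventually_elim
      case (elim N)
      have rescale: "(\<lambda>x. iexp (t * (real_of_int (snd x) / sqrt (a N * real N)))) =
              (\<lambda>x. iexp ((t / sqrt (a N * real N)) * real_of_int (snd x)))"
        by (simp add: field_simps)
      have "char (M N) t = (CLINT x|measure_pmf (p N). iexp (t * (real_of_int (snd x) / sqrt (a N * real N)))) ^ N"
        unfolding M_def Y_def by (rule char_iid_sum)
      also have "\<dots> = complex_of_real (1 - a N + a N * cos (t / sqrt (a N * real N))) ^ N"
        unfolding rescale using elim by (subst char_symmetric_ternary) auto
      finally show ?case by simp
    qed
    moreover have "(\<lambda>N. complex_of_real ((1 - a N + a N * cos (t / sqrt (a N * real N))) ^ N))
        \<longlonglongrightarrow> complex_of_real (exp (- (t^2) / 2))"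
      by (intro tendsto_of_real char_power_limit[OF a var])
    ultimately show "(\<lambda>N. char (M N) t) \<longlonglongrightarrow> char std_normal_distribution t"
      unfolding char_std_normal_distribution
      by (simp add: Lim_transform_eventually eventually_mono)
  qed
  then have "(\<lambda>N. cdf (M N) x) \<longlonglongrightarrow> cdf std_normal_distribution x"
    using std_normal_isCont_cdf unfolding weak_conv_m_def weak_conv_def by blast
  moreover have "cdf (M N) x = measure_pmf.prob (Y N) {y. real_of_int y / sqrt (a N * real N) \<le> x}" for N
    unfolding cdf_def2 M_def by (subst measure_distr) (auto simp: vimage_def)
  ultimately show ?thesis unfolding Y_def cdf_def2 by simp
qed

theorem mainTheorem16:
  fixes \<delta> :: real and T :: "nat \<Rightarrow> nat" and x :: real
  assumes "\<delta> > 0"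
    and "\<And>N. even (T N)"
    and "\<And>N. T N \<le> N"
    and "filterlim T at_top sequentially"
    and "filterlim (\<lambda>N. real (T N) - ln (real N) / c_delta \<delta>) at_bot sequentially"
  shows "(\<lambda>N. measure_pmf.prob (Y_law \<delta> (T N) N)
            {y. real_of_int y / sqrt (2 * exp \<delta> * Q1 (T N) (phi \<delta> (T N)) * real N) \<le> x})
         \<longlonglongrightarrow> measure (density lborel std_normal_density) {..x}"
proof -
  define a where "a N = 2 * exp \<delta> * Q1 (T N) (phi \<delta> (T N))" for N
  have "eventually (\<lambda>N. T N \<ge> 2) sequentially"
    using assms(4) by (simp add: filterlim_at_top)
  then have law: "eventually (\<lambda>N. set_pmf (map_pmf snd (step_pmf \<delta> (T N))) \<subseteq> {-1,0,1}
      \<and> pmf (map_pmf snd (step_pmf \<delta> (T N))) 1 = a N / 2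
      \<and> pmf (map_pmf snd (step_pmf \<delta> (T N))) (-1) = a N / 2 \<and> a N > 0) sequentially"
    by (rule eventually_mono) (use crossing_law[OF assms(1)] in \<open>simp add: a_def\<close>)
  have var: "filterlim (\<lambda>N. a N * real N) at_top sequentially"
    using scaled_variance_to_infinity[OF assms(1,4,5)] by (simp add: a_def)
  show ?thesis
    using clt_symmetric_ternary[OF law var, of x] unfolding Y_law_def a_def .
qed

end
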